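(* Let $n,k$ be positive integers with $k\le\frac14 n$. Then every $k$-homogeneous partial latin square of order $n$ is contained in a $(k+1)$-homogeneous partial latin square of order $n$ (that is, some of its blank cells can be filled to obtain a $(k+1)$-homogeneous partial latin square).
   Context: A $k$-homogeneous partial latin square of order $n$ is an $n\times n$ array in which each cell is either blank or contains one of the symbols $\{1,2,\dots,n\}$, such that (i) no symbol occurs twice in any row or any column, (ii) each symbol occurs exactly $k$ times in the array, and (iii) each row and each column contains exactly $k$ filled cells. *)

theory Defs
  imports Main
begin

text \<open>A partial array of order n: cells (i,j) with i,j < n; L i j = None means blank,
  L i j = Some s means the cell contains symbol s. Outside the n x n range L is None.\<close>

definition partial_latin_square :: "nat \<Rightarrow> (nat \<Rightarrow> nat \<Rightarrow> nat option) \<Rightarrow> bool" where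
  "partial_latin_square n L \<longleftrightarrow>
     (\<forall>i j. (i \<ge> n \<or> j \<ge> n) \<longrightarrow> L i j = None) \<and>
     (\<forall>i<n. \<forall>j<n. \<forall>s. L i j = Some s \<longrightarrow> s \<in> {1..n}) \<and>
     (\<forall>i<n. \<forall>j1<n. \<forall>j2<n. j1 \<noteq> j2 \<longrightarrow> L i j1 \<noteq> None \<longrightarrow> L i j1 \<noteq> L i j2) \<and>
     (\<forall>j<n. \<forall>i1<n. \<forall>i2<n. i1 \<noteq> i2 \<longrightarrow> L i1 j \<noteq> None \<longrightarrow> L i1 j \<noteq> L i2 j)"

definition homogeneous_pls :: "nat \<Rightarrow> nat \<Rightarrow> (nat \<Rightarrow> nat \<Rightarrow> nat option) \<Rightarrow> bool" where
  "homogeneous_pls k n L \<longleftrightarrow>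
     partial_latin_square n L \<and>
     (\<forall>s\<in>{1..n}. card {(i, j). i < n \<and> j < n \<and> L i j = Some s} = k) \<and>
     (\<forall>i<n. card {j. j < n \<and> L i j \<noteq> None} = k) \<and>
     (\<forall>j<n. card {i. i < n \<and> L i j \<noteq> None} = k)"

definition pls_contained :: "nat \<Rightarrow> (nat \<Rightarrow> nat \<Rightarrow> nat option) \<Rightarrow> (nat \<Rightarrow> nat \<Rightarrow> nat option) \<Rightarrow> bool" where
  "pls_contained n L M \<longleftrightarrow> (\<forall>i<n. \<forall>j<n. L i j \<noteq> None \<longrightarrow> M i j = L i j)"

end

theory Submission
  imports Defs
begin

(* Idea: fill a transversal of blank cells.  First choose a permutation sigma of the rows
   such that every cell (i, sigma i) is blank in L; then choose a bijection tau from the rows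
   onto the symbols {1..n} such that tau i occurs neither in row i nor in column sigma i.
   Writing tau i into cell (i, sigma i) keeps the latin property and adds exactly one cell to
   every row, every column and every symbol, so the result is (k+1)-homogeneous.

   Both choices are perfect matchings in dense bipartite graphs.  For
   sigma the degrees are n - k (blank cells per row and column), for tau they are n - 2k, and
   n <= 2 (n - 2k) is exactly the hypothesis 4k <= n. *)

definition sdr :: "'a set \<Rightarrow> ('a \<Rightarrow> 'b set) \<Rightarrow> ('a \<Rightarrow> 'b) \<Rightarrow> bool" where
  "sdr A S f \<longleftrightarrow> inj_on f A \<and> (\<forall>a\<in>A. f a \<in> S a)"

definition hall_condition :: "'a set \<Rightarrow> ('a \<Rightarrow> 'b set) \<Rightarrow> bool" where
  "hall_condition A S \<longleftrightarrow> (\<forall>X\<subseteq>A. card X \<le> card (\<Union>(S ` X)))"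

lemma hall_condition_member:
  assumes "hall_condition A S" and "a \<in> A"
  shows "S a \<noteq> {} \<and> finite (S a)"
proof -
  have "card {a} \<le> card (\<Union>(S ` {a}))"
    using assms unfolding hall_condition_def by blast
  then have "0 < card (S a)" by simp
  then show ?thesis by (simp add: card_gt_0_iff)
qed

lemma hall_condition_finite_Union:
  assumes "hall_condition A S" and "finite X" and "X \<subseteq> A"
  shows "finite (\<Union>(S ` X))"
proof (rule finite_UN_I[OF \<open>finite X\<close>])
  fix a assume "a \<in> X"
  then show "finite (S a)" using hall_condition_member[OF assms(1)] assms(3) by blast
qed

lemma sdr_insert_point:
  assumes f: "sdr (A - {a}) (\<lambda>x. S x - {b}) f" and b: "b \<in> S a"
  shows "sdr A S (f(a := b))"
proof -
  have inj: "inj_on f (A - {a})" and f: "\<forall>x\<in>A - {a}. f x \<in> S x \<and> f x \<noteq> b"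
    using f unfolding sdr_def by auto
  have "inj_on (f(a := b)) A"
  proof (rule inj_onI)
    fix x y assume "x \<in> A" "y \<in> A" "(f(a := b)) x = (f(a := b)) y"
    then show "x = y" using inj f by (cases "x = a"; cases "y = a") (auto simp: inj_on_eq_iff)
  qed
  then show ?thesis using f b unfolding sdr_def by auto
qed

lemma sdr_combine:
  assumes f: "sdr X S f" and g: "sdr (A - X) (\<lambda>x. S x - \<Union>(S ` X)) g"
  shows "sdr A S (\<lambda>x. if x \<in> X then f x else g x)"
proof -
  let ?h = "\<lambda>x. if x \<in> X then f x else g x"
  have injf: "inj_on f X" and fS: "\<And>x. x \<in> X \<Longrightarrow> f x \<in> S x"
    and injg: "inj_on g (A - X)" and gS: "\<And>x. x \<in> A - X \<Longrightarrow> g x \<in> S x - \<Union>(S ` X)"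
    using f g unfolding sdr_def by blast+
  have side: "?h x \<in> \<Union>(S ` X) \<longleftrightarrow> x \<in> X" if "x \<in> A" for x
    using fS gS that by (cases "x \<in> X") auto
  have "inj_on ?h A"
  proof (rule inj_onI)
    fix x y assume xy: "x \<in> A" "y \<in> A" "?h x = ?h y"
    then have "x \<in> X \<longleftrightarrow> y \<in> X" using side by metis
    then show "x = y"
      using xy injf injg by (cases "x \<in> X") (simp_all add: inj_on_eq_iff)
  qed
  then show ?thesis using fS gS unfolding sdr_def by auto
qed

lemma hall_condition_remove_point:
  assumes fin: "finite A" and hall: "hall_condition A S"
    and surplus: "\<And>X. X \<subseteq> A \<Longrightarrow> X \<noteq> {} \<Longrightarrow> X \<noteq> A \<Longrightarrow> card X < card (\<Union>(S ` X))"
    and a: "a \<in> A"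
  shows "hall_condition (A - {a}) (\<lambda>x. S x - {b})"
  unfolding hall_condition_def
proof (intro allI impI)
  fix X assume X: "X \<subseteq> A - {a}"
  show "card X \<le> card (\<Union>((\<lambda>x. S x - {b}) ` X))"
  proof (cases "X = {}")
    case False
    have "X \<subseteq> A" "X \<noteq> A" using X a by auto
    then have "card X < card (\<Union>(S ` X))" using surplus False by blast
    moreover have "finite (\<Union>(S ` X))"
      using hall_condition_finite_Union[OF hall] \<open>X \<subseteq> A\<close> fin finite_subset by blast
    then have "card (\<Union>(S ` X)) - 1 \<le> card (\<Union>(S ` X) - {b})"
      by (simp add: card_Diff_singleton_if)
    moreover have "\<Union>((\<lambda>x. S x - {b}) ` X) = \<Union>(S ` X) - {b}" by blast
    ultimately show ?thesis by simp
  qed simp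
qed

lemma hall_condition_remove_tight:
  assumes fin: "finite A" and hall: "hall_condition A S"
    and X: "X \<subseteq> A" and tight: "card (\<Union>(S ` X)) \<le> card X"
  shows "hall_condition (A - X) (\<lambda>x. S x - \<Union>(S ` X))"
  unfolding hall_condition_def
proof (intro allI impI)
  fix Y assume Y: "Y \<subseteq> A - X"
  let ?U = "\<Union>(S ` X)" and ?V = "\<Union>((\<lambda>x. S x - \<Union>(S ` X)) ` Y)"
  have YA: "Y \<subseteq> A" and XY: "X \<union> Y \<subseteq> A" using X Y by blast+
  have finX: "finite X" and finY: "finite Y" using X YA fin finite_subset by auto
  have finU: "finite ?U" using hall_condition_finite_Union[OF hall finX X] .
  have finV: "finite ?V"
    by (rule finite_subset[OF _ hall_condition_finite_Union[OF hall finY YA]]) blast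
  have "card X + card Y = card (X \<union> Y)"
    using Y by (intro card_Un_disjoint[symmetric] finX finY) blast
  also have "\<dots> \<le> card (\<Union>(S ` (X \<union> Y)))"
    using hall[unfolded hall_condition_def, rule_format, OF XY] .
  also have "\<Union>(S ` (X \<union> Y)) = ?U \<union> ?V" by blast
  also have "card (?U \<union> ?V) = card ?U + card ?V"
    using finU finV by (intro card_Un_disjoint) blast+
  finally show "card Y \<le> card ?V" using tight by linarith
qed

(* Hall's marriage theorem, by strong induction on the size of the index set: either some
   proper nonempty subfamily X is tight, and one combines SDRs of X and of the rest, or every
   such subfamily has surplus, and any choice for a single member can be extended. *)
theorem hall:
  assumes "finite A" and "hall_condition A S"
  shows "\<exists>f. sdr A S f"
  using assms
proof (induction "card A" arbitrary: A S rule: less_induct)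
  case less
  show ?case
  proof (cases "\<exists>X. X \<subseteq> A \<and> X \<noteq> {} \<and> X \<noteq> A \<and> card (\<Union>(S ` X)) \<le> card X")
    case True
    then obtain X where X: "X \<subseteq> A" "X \<noteq> {}" "X \<noteq> A"
      and tight: "card (\<Union>(S ` X)) \<le> card X" by blast
    have finX: "finite X" using X(1) less.prems(1) by (rule finite_subset)
    have "X \<subset> A" using X(1,3) by blast
    then have "card X < card A" using less.prems(1) by (rule psubset_card_mono[rotated])
    moreover note finX
    moreover have "hall_condition X S"
      using less.prems(2) X(1) unfolding hall_condition_def by blast
    ultimately obtain f where f: "sdr X S f" by (rule less.hyps[THEN exE])
    have "0 < card X" using X(2) finX by (simp add: card_gt_0_iff)
    moreover have "card X \<le> card A" using less.prems(1) X(1) by (rule card_mono)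
    ultimately have "card (A - X) < card A" using finX X(1) by (simp add: card_Diff_subset)
    moreover have "finite (A - X)" using less.prems(1) by blast
    moreover have "hall_condition (A - X) (\<lambda>x. S x - \<Union>(S ` X))"
      using hall_condition_remove_tight[OF less.prems X(1) tight] .
    ultimately obtain g where "sdr (A - X) (\<lambda>x. S x - \<Union>(S ` X)) g"
      by (rule less.hyps[THEN exE])
    then have "sdr A S (\<lambda>x. if x \<in> X then f x else g x)" by (rule sdr_combine[OF f])
    then show ?thesis by blast
  next
    case False
    have surplus: "card X < card (\<Union>(S ` X))" if "X \<subseteq> A" "X \<noteq> {}" "X \<noteq> A" for X
      using False that by (simp add: not_le) blast
    show ?thesis
    proof (cases "A = {}")
      case True
      then have "sdr A S undefined" by (simp add: sdr_def)
      then show ?thesis by blast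
    next
      case False
      then obtain a where a: "a \<in> A" by blast
      then have "S a \<noteq> {}" using hall_condition_member[OF less.prems(2)] by simp
      then obtain b where b: "b \<in> S a" by blast
      have "card (A - {a}) < card A" using less.prems(1) a by (rule card_Diff1_less)
      moreover have "finite (A - {a})" using less.prems(1) by blast
      moreover have "hall_condition (A - {a}) (\<lambda>x. S x - {b})"
        using hall_condition_remove_point[OF less.prems surplus a] .
      ultimately obtain f where "sdr (A - {a}) (\<lambda>x. S x - {b}) f"
        by (rule less.hyps[THEN exE])
      then have "sdr A S (f(a := b))" using b by (rule sdr_insert_point)
      then show ?thesis by blast
    qed
  qed
qed

lemma sdr_bij_betw:
  assumes f: "sdr A S f" and B: "finite B" "\<And>a. a \<in> A \<Longrightarrow> S a \<subseteq> B" and card: "card A = card B"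
  shows "bij_betw f A B"
proof -
  have inj: "inj_on f A" and img: "f ` A \<subseteq> B" using f B(2) unfolding sdr_def by blast+
  have "card B \<le> card (f ` A)" using card card_image[OF inj] by simp
  then have "f ` A = B" using card_seteq[OF B(1) img] by blast
  then show ?thesis using inj unfolding bij_betw_def by blast
qed

(* A subfamily of size at most d
   is covered by the neighbourhood of any single member; a larger one meets the neighbourhood
   of every b, hence its union is all of B. *)
lemma hall_dense:
  assumes finA: "finite A" and finB: "finite B" and sub: "\<And>a. a \<in> A \<Longrightarrow> S a \<subseteq> B"
    and degA: "\<And>a. a \<in> A \<Longrightarrow> d \<le> card (S a)"
    and degB: "\<And>b. b \<in> B \<Longrightarrow> d \<le> card {a \<in> A. b \<in> S a}"
    and size: "card A \<le> card B" "card A \<le> 2 * d"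
  shows "\<exists>f. sdr A S f"
proof (rule hall[OF finA])
  show "hall_condition A S" unfolding hall_condition_def
  proof (intro allI impI)
    fix X assume X: "X \<subseteq> A"
    have UB: "\<Union>(S ` X) \<subseteq> B" using X sub by blast
    have finU: "finite (\<Union>(S ` X))" using finite_subset[OF UB finB] .
    have finX: "finite X" using finite_subset[OF X finA] .
    consider (empty) "X = {}" | (small) "X \<noteq> {}" "card X \<le> d" | (large) "d < card X" by linarith
    then show "card X \<le> card (\<Union>(S ` X))"
    proof cases
      case empty then show ?thesis by simp
    next
      case small
      then obtain a where a: "a \<in> X" by blast
      have "card X \<le> card (S a)" using small(2) degA a X by force
      also have "\<dots> \<le> card (\<Union>(S ` X))" using a finU by (intro card_mono) blast+
      finally show ?thesis .
    next
      case large
      have "B \<subseteq> \<Union>(S ` X)"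
      proof
        fix b assume b: "b \<in> B"
        let ?T = "{a \<in> A. b \<in> S a}"
        have "X \<inter> ?T \<noteq> {}"
        proof
          assume "X \<inter> ?T = {}"
          then have "card X + card ?T = card (X \<union> ?T)"
            using finX finA by (intro card_Un_disjoint[symmetric]) auto
          also have "\<dots> \<le> card A" using X finA by (intro card_mono) auto
          finally show False using large degB[OF b] size(2) by linarith
        qed
        then show "b \<in> \<Union>(S ` X)" by blast
      qed
      then have "card B \<le> card (\<Union>(S ` X))" by (rule card_mono[OF finU])
      moreover have "card X \<le> card A" using finA X by (rule card_mono)
      ultimately show ?thesis using size(1) by linarith
    qed
  qed
qed

lemma homogeneous_plsD:
  assumes "homogeneous_pls k n L"
  shows "partial_latin_square n L"
    and "\<And>s. s \<in> {1..n} \<Longrightarrow> card {(i, j). i < n \<and> j < n \<and> L i j = Some s} = k"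
    and "\<And>i. i < n \<Longrightarrow> card {j. j < n \<and> L i j \<noteq> None} = k"
    and "\<And>j. j < n \<Longrightarrow> card {i. i < n \<and> L i j \<noteq> None} = k"
  using assms unfolding homogeneous_pls_def by blast+

lemma card_below_complement: "card {j. j < n \<and> \<not> P j} = n - card {j. j < n \<and> P j}"
proof -
  have "{j. j < n \<and> \<not> P j} = {..<n} - {j. j < n \<and> P j}" by blast
  then show ?thesis by (simp add: card_Diff_subset subset_eq)
qed

lemma card_values_le:
  assumes "finite A"
  shows "card {s. \<exists>x\<in>A. f x = Some s} \<le> card {x \<in> A. f x \<noteq> None}"
proof -
  have "{s. \<exists>x\<in>A. f x = Some s} \<subseteq> (the \<circ> f) ` {x \<in> A. f x \<noteq> None}"
  proof
    fix s assume "s \<in> {s. \<exists>x\<in>A. f x = Some s}"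
    then obtain x where "x \<in> A" "f x = Some s" by blast
    then show "s \<in> (the \<circ> f) ` {x \<in> A. f x \<noteq> None}" by (intro image_eqI[of _ _ x]) auto
  qed
  then have "card {s. \<exists>x\<in>A. f x = Some s} \<le> card ((the \<circ> f) ` {x \<in> A. f x \<noteq> None})"
    using assms by (intro card_mono) auto
  also have "\<dots> \<le> card {x \<in> A. f x \<noteq> None}" using assms by (intro card_image_le) auto
  finally show ?thesis .
qed

definition row_symbols :: "nat \<Rightarrow> (nat \<Rightarrow> nat \<Rightarrow> nat option) \<Rightarrow> nat \<Rightarrow> nat set" where
  "row_symbols n L i = {s. \<exists>j<n. L i j = Some s}"

definition col_symbols :: "nat \<Rightarrow> (nat \<Rightarrow> nat \<Rightarrow> nat option) \<Rightarrow> nat \<Rightarrow> nat set" where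
  "col_symbols n L j = {s. \<exists>i<n. L i j = Some s}"

lemma row_symbols_subset:
  assumes "partial_latin_square n L" and "i < n"
  shows "row_symbols n L i \<subseteq> {1..n}"
  using assms unfolding partial_latin_square_def row_symbols_def by blast

lemma col_symbols_subset:
  assumes "partial_latin_square n L" and "j < n"
  shows "col_symbols n L j \<subseteq> {1..n}"
  using assms unfolding partial_latin_square_def col_symbols_def by blast

lemma row_symbols_card:
  assumes "homogeneous_pls k n L" and "i < n"
  shows "card (row_symbols n L i) \<le> k"
  using card_values_le[of "{..<n}" "L i"] homogeneous_plsD(3)[OF assms]
  unfolding row_symbols_def by (simp add: Bex_def)

lemma col_symbols_card:
  assumes "homogeneous_pls k n L" and "j < n"
  shows "card (col_symbols n L j) \<le> k"
  using card_values_le[of "{..<n}" "\<lambda>i. L i j"] homogeneous_plsD(4)[OF assms]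
  unfolding col_symbols_def by (simp add: Bex_def)

lemma symbol_rows_card:
  assumes "homogeneous_pls k n L" and "s \<in> {1..n}"
  shows "card {i. i < n \<and> s \<in> row_symbols n L i} \<le> k"
proof -
  let ?P = "{(i, j). i < n \<and> j < n \<and> L i j = Some s}"
  have finP: "finite ?P" by (rule finite_subset[of _ "{..<n} \<times> {..<n}"]) auto
  have "{i. i < n \<and> s \<in> row_symbols n L i} \<subseteq> fst ` ?P"
  proof
    fix i assume "i \<in> {i. i < n \<and> s \<in> row_symbols n L i}"
    then obtain j where "i < n" "j < n" "L i j = Some s" unfolding row_symbols_def by blast
    then show "i \<in> fst ` ?P" by (intro image_eqI[of _ _ "(i, j)"]) auto
  qed
  then have "card {i. i < n \<and> s \<in> row_symbols n L i} \<le> card (fst ` ?P)"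
    using finP by (intro card_mono) auto
  also have "\<dots> \<le> card ?P" using finP by (rule card_image_le)
  finally show ?thesis using homogeneous_plsD(2)[OF assms] by simp
qed

lemma symbol_cols_card:
  assumes "homogeneous_pls k n L" and "s \<in> {1..n}"
  shows "card {j. j < n \<and> s \<in> col_symbols n L j} \<le> k"
proof -
  let ?P = "{(i, j). i < n \<and> j < n \<and> L i j = Some s}"
  have finP: "finite ?P" by (rule finite_subset[of _ "{..<n} \<times> {..<n}"]) auto
  have "{j. j < n \<and> s \<in> col_symbols n L j} \<subseteq> snd ` ?P"
  proof
    fix j assume "j \<in> {j. j < n \<and> s \<in> col_symbols n L j}"
    then obtain i where "i < n" "j < n" "L i j = Some s" unfolding col_symbols_def by blast
    then show "j \<in> snd ` ?P" by (intro image_eqI[of _ _ "(i, j)"]) auto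
  qed
  then have "card {j. j < n \<and> s \<in> col_symbols n L j} \<le> card (snd ` ?P)"
    using finP by (intro card_mono) auto
  also have "\<dots> \<le> card ?P" using finP by (rule card_image_le)
  finally show ?thesis using homogeneous_plsD(2)[OF assms] by simp
qed

(* Step 1: the blank cells contain a transversal, i.e. a permutation sigma with every cell
   (i, sigma i) blank.  Every row and column has n - k blanks and n <= 2 (n - k). *)
lemma exists_blank_transversal:
  assumes hom: "homogeneous_pls k n L" and small: "2 * k \<le> n"
  shows "\<exists>\<sigma>. bij_betw \<sigma> {..<n} {..<n} \<and> (\<forall>i<n. L i (\<sigma> i) = None)"
proof -
  define S where "S i = {j. j < n \<and> L i j = None}" for i
  have row_blanks: "card (S i) = n - k" if "i < n" for i
    using card_below_complement[of n "\<lambda>j. L i j \<noteq> None"] homogeneous_plsD(3)[OF hom that]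
    unfolding S_def by simp
  have col_blanks: "card {i \<in> {..<n}. j \<in> S i} = n - k" if "j < n" for j
  proof -
    have "{i \<in> {..<n}. j \<in> S i} = {i. i < n \<and> \<not> L i j \<noteq> None}" using that unfolding S_def by auto
    then show ?thesis
      using card_below_complement[of n "\<lambda>i. L i j \<noteq> None"] homogeneous_plsD(4)[OF hom that] by simp
  qed
  have "\<exists>\<sigma>. sdr {..<n} S \<sigma>"
    by (rule hall_dense[where B = "{..<n}" and d = "n - k"])
      (use row_blanks col_blanks small in \<open>auto simp: S_def\<close>)
  then obtain \<sigma> where \<sigma>: "sdr {..<n} S \<sigma>" by blast
  have "bij_betw \<sigma> {..<n} {..<n}" by (rule sdr_bij_betw[OF \<sigma>]) (auto simp: S_def)
  moreover have "\<forall>i<n. L i (\<sigma> i) = None" using \<sigma> unfolding sdr_def S_def by blast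
  ultimately show ?thesis by blast
qed

lemma available_symbols_card:
  assumes hom: "homogeneous_pls k n L" and i: "i < n" and j: "j < n"
  shows "n - 2 * k \<le> card ({1..n} - (row_symbols n L i \<union> col_symbols n L j))"
proof -
  let ?X = "row_symbols n L i \<union> col_symbols n L j"
  have pls: "partial_latin_square n L" using homogeneous_plsD(1)[OF hom] .
  have "?X \<subseteq> {1..n}" using row_symbols_subset[OF pls i] col_symbols_subset[OF pls j] by blast
  then have finX: "finite ?X" by (rule finite_subset) simp
  have "card ?X \<le> k + k"
    using card_Un_le[of "row_symbols n L i" "col_symbols n L j"]
      row_symbols_card[OF hom i] col_symbols_card[OF hom j] by linarith
  moreover have "card {1..n} - card ?X \<le> card ({1..n} - ?X)"
    by (rule diff_card_le_card_Diff[OF finX])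
  ultimately show ?thesis by simp
qed

(* Dually, for a permutation sigma, a symbol s is missing from row i and from column sigma i
   for at least n - 2k rows i: at most k rows contain s, and at most k rows i have s in
   column sigma i. *)
lemma available_rows_card:
  assumes hom: "homogeneous_pls k n L" and \<sigma>: "bij_betw \<sigma> {..<n} {..<n}" and s: "s \<in> {1..n}"
  shows "n - 2 * k \<le> card {i. i < n \<and> s \<notin> row_symbols n L i \<and> s \<notin> col_symbols n L (\<sigma> i)}"
    (is "_ \<le> card ?avail")
proof -
  define R where "R = {i. i < n \<and> s \<in> row_symbols n L i}"
  define C where "C = {j. j < n \<and> s \<in> col_symbols n L j}"
  define Q where "Q = {i. i < n \<and> \<sigma> i \<in> C}"
  have "inj_on \<sigma> Q" using bij_betw_imp_inj_on[OF \<sigma>] by (rule inj_on_subset) (auto simp: Q_def)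
  then have "card Q \<le> card C" by (rule card_inj_on_le) (auto simp: Q_def C_def)
  then have "card (R \<union> Q) \<le> k + k"
    using card_Un_le[of R Q] symbol_rows_card[OF hom s] symbol_cols_card[OF hom s]
    unfolding R_def C_def by linarith
  moreover have "card {..<n} - card (R \<union> Q) \<le> card ({..<n} - (R \<union> Q))"
    by (rule diff_card_le_card_Diff) (auto simp: R_def Q_def)
  moreover have "{..<n} - (R \<union> Q) \<subseteq> ?avail"
    using \<sigma> unfolding R_def Q_def C_def by (auto dest: bij_betw_apply)
  then have "card ({..<n} - (R \<union> Q)) \<le> card ?avail" by (intro card_mono) auto
  ultimately show ?thesis by simp
qed

(* Here the degree bound is n - 2k,
   which is where 4k <= n is needed. *)
lemma exists_fresh_symbols:
  assumes hom: "homogeneous_pls k n L" and small: "4 * k \<le> n"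
    and \<sigma>: "bij_betw \<sigma> {..<n} {..<n}"
  shows "\<exists>\<tau>. bij_betw \<tau> {..<n} {1..n} \<and>
    (\<forall>i<n. \<tau> i \<notin> row_symbols n L i \<and> \<tau> i \<notin> col_symbols n L (\<sigma> i))"
proof -
  define S where "S i = {1..n} - (row_symbols n L i \<union> col_symbols n L (\<sigma> i))" for i
  have row_degree: "n - 2 * k \<le> card (S i)" if "i < n" for i
    unfolding S_def using available_symbols_card[OF hom that] \<sigma> that by (auto dest: bij_betw_apply)
  have symbol_degree: "n - 2 * k \<le> card {i \<in> {..<n}. s \<in> S i}" if s: "s \<in> {1..n}" for s
  proof -
    have "{i \<in> {..<n}. s \<in> S i}
        = {i. i < n \<and> s \<notin> row_symbols n L i \<and> s \<notin> col_symbols n L (\<sigma> i)}"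
      using s unfolding S_def by auto
    then show ?thesis using available_rows_card[OF hom \<sigma> s] by simp
  qed
  have "\<exists>\<tau>. sdr {..<n} S \<tau>"
    by (rule hall_dense[where B = "{1..n}" and d = "n - 2 * k"])
      (use row_degree symbol_degree small in \<open>auto simp: S_def\<close>)
  then obtain \<tau> where \<tau>: "sdr {..<n} S \<tau>" by blast
  have "bij_betw \<tau> {..<n} {1..n}" by (rule sdr_bij_betw[OF \<tau>]) (auto simp: S_def)
  moreover have "\<forall>i<n. \<tau> i \<notin> row_symbols n L i \<and> \<tau> i \<notin> col_symbols n L (\<sigma> i)"
    using \<tau> unfolding sdr_def S_def by blast
  ultimately show ?thesis by blast
qed

definition add_transversal ::
  "nat \<Rightarrow> (nat \<Rightarrow> nat) \<Rightarrow> (nat \<Rightarrow> nat) \<Rightarrow> (nat \<Rightarrow> nat \<Rightarrow> nat option) \<Rightarrow> nat \<Rightarrow> nat \<Rightarrow> nat option"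
  where "add_transversal n \<sigma> \<tau> L i j = (if i < n \<and> j = \<sigma> i then Some (\<tau> i) else L i j)"

lemma add_transversal_contains:
  assumes "\<forall>i<n. L i (\<sigma> i) = None"
  shows "pls_contained n L (add_transversal n \<sigma> \<tau> L)"
  using assms unfolding pls_contained_def add_transversal_def by auto

lemma add_transversal_row_count:
  assumes "i < n" and "\<sigma> i < n" and "L i (\<sigma> i) = None"
  shows "card {j. j < n \<and> add_transversal n \<sigma> \<tau> L i j \<noteq> None} = card {j. j < n \<and> L i j \<noteq> None} + 1"
proof -
  have "{j. j < n \<and> add_transversal n \<sigma> \<tau> L i j \<noteq> None} = insert (\<sigma> i) {j. j < n \<and> L i j \<noteq> None}"
    using assms unfolding add_transversal_def by auto
  moreover have "\<sigma> i \<notin> {j. j < n \<and> L i j \<noteq> None}" using assms(3) by simp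
  ultimately show ?thesis by simp
qed

lemma add_transversal_col_count:
  assumes \<sigma>: "bij_betw \<sigma> {..<n} {..<n}" and blank: "\<forall>i<n. L i (\<sigma> i) = None" and j: "j < n"
  shows "card {i. i < n \<and> add_transversal n \<sigma> \<tau> L i j \<noteq> None} = card {i. i < n \<and> L i j \<noteq> None} + 1"
proof -
  obtain i0 where i0: "i0 < n" "\<sigma> i0 = j" using bij_betw_imp_surj_on[OF \<sigma>] j by (metis imageE lessThan_iff)
  have "j = \<sigma> i \<longleftrightarrow> i = i0" if "i < n" for i
    using bij_betw_imp_inj_on[OF \<sigma>] i0 that unfolding inj_on_def by blast
  then have "{i. i < n \<and> add_transversal n \<sigma> \<tau> L i j \<noteq> None} = insert i0 {i. i < n \<and> L i j \<noteq> None}"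
    using i0 unfolding add_transversal_def by auto
  moreover have "i0 \<notin> {i. i < n \<and> L i j \<noteq> None}" using blank i0 by auto
  ultimately show ?thesis by simp
qed

lemma add_transversal_symbol_count:
  assumes \<sigma>_lt: "\<forall>i<n. \<sigma> i < n" and blank: "\<forall>i<n. L i (\<sigma> i) = None"
    and \<tau>: "bij_betw \<tau> {..<n} {1..n}" and s: "s \<in> {1..n}"
  shows "card {(i, j). i < n \<and> j < n \<and> add_transversal n \<sigma> \<tau> L i j = Some s}
    = card {(i, j). i < n \<and> j < n \<and> L i j = Some s} + 1"
proof -
  let ?P = "{(i, j). i < n \<and> j < n \<and> L i j = Some s}"
  obtain i0 where i0: "i0 < n" "\<tau> i0 = s" using bij_betw_imp_surj_on[OF \<tau>] s by (metis imageE lessThan_iff)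
  have "\<tau> i = s \<longleftrightarrow> i = i0" if "i < n" for i
    using bij_betw_imp_inj_on[OF \<tau>] i0 that unfolding inj_on_def by blast
  then have "{(i, j). i < n \<and> j < n \<and> add_transversal n \<sigma> \<tau> L i j = Some s} = insert (i0, \<sigma> i0) ?P"
    using i0 \<sigma>_lt blank unfolding add_transversal_def by auto
  moreover have "(i0, \<sigma> i0) \<notin> ?P" using blank i0 by auto
  moreover have "finite ?P" by (rule finite_subset[of _ "{..<n} \<times> {..<n}"]) auto
  ultimately show ?thesis by simp
qed

(* The filled array is again a partial latin square: the new symbol tau i is new to row i
   and to column sigma i, and each row and column receives only one new cell. *)
lemma add_transversal_pls:
  assumes pls: "partial_latin_square n L"
    and \<sigma>: "bij_betw \<sigma> {..<n} {..<n}" and blank: "\<forall>i<n. L i (\<sigma> i) = None"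
    and \<tau>: "bij_betw \<tau> {..<n} {1..n}"
    and fresh: "\<forall>i<n. \<tau> i \<notin> row_symbols n L i \<and> \<tau> i \<notin> col_symbols n L (\<sigma> i)"
  shows "partial_latin_square n (add_transversal n \<sigma> \<tau> L)"
proof -
  let ?M = "add_transversal n \<sigma> \<tau> L"
  have \<sigma>_lt: "\<sigma> i < n" if "i < n" for i using \<sigma> that by (auto dest: bij_betw_apply)
  have \<sigma>_inj: "\<sigma> i = \<sigma> i' \<Longrightarrow> i = i'" if "i < n" "i' < n" for i i'
    using bij_betw_imp_inj_on[OF \<sigma>] that unfolding inj_on_def by blast
  have \<tau>_range: "\<tau> i \<in> {1..n}" if "i < n" for i using \<tau> that by (auto dest: bij_betw_apply)
  have old_row: "L i j \<noteq> Some (\<tau> i)" if "i < n" "j < n" for i j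
    using fresh that unfolding row_symbols_def by blast
  have old_col: "L i' (\<sigma> i) \<noteq> Some (\<tau> i)" if "i < n" "i' < n" for i i'
    using fresh that unfolding col_symbols_def by blast
  have outside: "?M i j = None" if "n \<le> i \<or> n \<le> j" for i j
  proof -
    have "\<not> (i < n \<and> j = \<sigma> i)" using that \<sigma>_lt[of i] by linarith
    then show ?thesis using pls that unfolding partial_latin_square_def add_transversal_def by auto
  qed
  have range: "s \<in> {1..n}" if "i < n" "j < n" "?M i j = Some s" for i j s
    using pls that \<tau>_range unfolding partial_latin_square_def add_transversal_def
    by (auto split: if_splits)
  have row: "?M i j1 \<noteq> ?M i j2" if "i < n" "j1 < n" "j2 < n" "j1 \<noteq> j2" "?M i j1 \<noteq> None" for i j1 j2
  proof (cases "j1 = \<sigma> i \<or> j2 = \<sigma> i")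
    case True
    then show ?thesis using that old_row unfolding add_transversal_def by (auto simp: eq_commute)
  next
    case False
    then show ?thesis using that pls unfolding add_transversal_def partial_latin_square_def by auto
  qed
  have col: "?M i1 j \<noteq> ?M i2 j" if "j < n" "i1 < n" "i2 < n" "i1 \<noteq> i2" "?M i1 j \<noteq> None" for j i1 i2
  proof (cases "j = \<sigma> i1 \<or> j = \<sigma> i2")
    case True
    then show ?thesis using that old_col \<sigma>_inj unfolding add_transversal_def by (auto simp: eq_commute)
  next
    case False
    then show ?thesis using that pls unfolding add_transversal_def partial_latin_square_def by auto
  qed
  show ?thesis unfolding partial_latin_square_def using outside range row col by blast
qed

lemma add_transversal_homogeneous:
  assumes hom: "homogeneous_pls k n L"
    and \<sigma>: "bij_betw \<sigma> {..<n} {..<n}" and blank: "\<forall>i<n. L i (\<sigma> i) = None"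
    and \<tau>: "bij_betw \<tau> {..<n} {1..n}"
    and fresh: "\<forall>i<n. \<tau> i \<notin> row_symbols n L i \<and> \<tau> i \<notin> col_symbols n L (\<sigma> i)"
  shows "homogeneous_pls (k + 1) n (add_transversal n \<sigma> \<tau> L)"
proof -
  have \<sigma>_lt: "\<forall>i<n. \<sigma> i < n" using \<sigma> by (auto dest: bij_betw_apply)
  show ?thesis
    unfolding homogeneous_pls_def
    using add_transversal_pls[OF homogeneous_plsD(1)[OF hom] \<sigma> blank \<tau> fresh]
      add_transversal_symbol_count[where L = L, OF \<sigma>_lt blank \<tau>] homogeneous_plsD(2)[OF hom]
      add_transversal_row_count[of _ n \<sigma> L \<tau>] \<sigma>_lt blank homogeneous_plsD(3)[OF hom]
      add_transversal_col_count[where L = L, OF \<sigma> blank] homogeneous_plsD(4)[OF hom]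
    by simp
qed

theorem theorem5p7:
  fixes n k :: nat and L :: "nat \<Rightarrow> nat \<Rightarrow> nat option"
  assumes "0 < n" and "0 < k" and "4 * k \<le> n"
    and "homogeneous_pls k n L"
  shows "\<exists>M. homogeneous_pls (k + 1) n M \<and> pls_contained n L M"
proof -
  have "2 * k \<le> n" using assms(3) by linarith
  then obtain \<sigma> where \<sigma>: "bij_betw \<sigma> {..<n} {..<n}" and blank: "\<forall>i<n. L i (\<sigma> i) = None"
    using exists_blank_transversal[OF assms(4)] by blast
  obtain \<tau> where \<tau>: "bij_betw \<tau> {..<n} {1..n}"
    and fresh: "\<forall>i<n. \<tau> i \<notin> row_symbols n L i \<and> \<tau> i \<notin> col_symbols n L (\<sigma> i)"
    using exists_fresh_symbols[OF assms(4) assms(3) \<sigma>] by blast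
  have "homogeneous_pls (k + 1) n (add_transversal n \<sigma> \<tau> L)"
    using add_transversal_homogeneous[OF assms(4) \<sigma> blank \<tau> fresh] .
  moreover have "pls_contained n L (add_transversal n \<sigma> \<tau> L)"
    using add_transversal_contains[where L = L, OF blank] .
  ultimately show ?thesis by blast
qed

end
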